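(* Let $a$ be a positive, locally integrable, monotonically increasing function on $\mathbb{R}_+$ such that $\hat a(x):=x/a(x)$ is also monotonically increasing on $\mathbb{R}_+$. Let $q$ be a complex-valued potential with $\|q\|_a:=\int_0^\infty a(x)|q(x)|\,dx<\infty$ (so $q\in L^1(\mathbb{R}_+)$). Define $$\rho=\rho(a,q):=\inf\Bigl\{t>0:\ \hat a(\sqrt t)\ge\frac{\log 2}{\|q\|_a}\Bigr\}.$$ Then $\sigma_d(H_q)$ is contained in the closed disk $\{\lambda:|\lambda|\le\rho^{-1}\}$. If $\hat a(\infty):=\lim_{x\to\infty}\hat a(x)<\log 2\,\|q\|_a^{-1}$, then $\rho=\infty$ and $\sigma_d(H_q)$ is empty.
   Context: $H_q=-\frac{d^2}{dx^2}+q$ on $L^2(\mathbb{R}_+)$ with Dirichlet boundary condition at $0$; $\sigma_d(H_q)$ is its set of eigenvalues of finite algebraic multiplicity in $\mathbb{C}\setminus\mathbb{R}_+$. Conventions: $\inf\emptyset=+\infty$, $1/\infty=0$. *)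

theory Defs
  imports "HOL-Analysis.Analysis"
begin

definition L2_half :: "(real \<Rightarrow> complex) \<Rightarrow> bool" where
  "L2_half f \<longleftrightarrow> set_borel_measurable lborel {0..} f \<and>
     set_integrable lborel {0..} (\<lambda>t. (cmod (f t))\<^sup>2)"

text \<open>(H_q - lam) y = f with y in the domain of the Dirichlet operator H_q:
  y, f in L2(R+), y(0) = 0, y and y' locally absolutely continuous on [0,inf),
  and -y'' + q y - lam y = f a.e., written in integrated form
  y'(x) = y'(0) + int_0^x ((q - lam) y - f).\<close>
definition Hq_minus_solves ::
  "(real \<Rightarrow> complex) \<Rightarrow> complex \<Rightarrow> (real \<Rightarrow> complex) \<Rightarrow> (real \<Rightarrow> complex) \<Rightarrow> bool" where
  "Hq_minus_solves q lam y f \<longleftrightarrow>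
     L2_half y \<and> L2_half f \<and> y 0 = 0 \<and>
     (\<exists>y'. (\<forall>x\<ge>0. (y has_vector_derivative y' x) (at x within {0..})) \<and>
       (\<forall>x\<ge>0. set_integrable lborel {0..x} (\<lambda>t. (q t - lam) * y t - f t) \<and>
          y' x = y' 0 + (LINT t:{0..x}|lborel. (q t - lam) * y t - f t)))"

text \<open>Root vectors: y in ker (H_q - lam)^k (functions compared on [0,inf)).\<close>
fun root_vec :: "(real \<Rightarrow> complex) \<Rightarrow> complex \<Rightarrow> nat \<Rightarrow> (real \<Rightarrow> complex) \<Rightarrow> bool" where
  "root_vec q lam 0 y \<longleftrightarrow> (\<forall>x\<ge>0. y x = 0)"
| "root_vec q lam (Suc k) y \<longleftrightarrow> (\<exists>f. Hq_minus_solves q lam y f \<and> root_vec q lam k f)"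

definition is_eigenvalue :: "(real \<Rightarrow> complex) \<Rightarrow> complex \<Rightarrow> bool" where
  "is_eigenvalue q lam \<longleftrightarrow> (\<exists>y. root_vec q lam 1 y \<and> (\<exists>x\<ge>0. y x \<noteq> 0))"

definition finite_alg_mult :: "(real \<Rightarrow> complex) \<Rightarrow> complex \<Rightarrow> bool" where
  "finite_alg_mult q lam \<longleftrightarrow>
     (\<exists>B. finite B \<and> (\<forall>k y. root_vec q lam k y \<longrightarrow>
        (\<exists>c. \<forall>x\<ge>0. y x = (\<Sum>b\<in>B. c b * b x))))"

definition sigma_d :: "(real \<Rightarrow> complex) \<Rightarrow> complex set" where
  "sigma_d q = {lam. \<not> (Im lam = 0 \<and> Re lam \<ge> 0) \<and> is_eigenvalue q lam \<and> finite_alg_mult q lam}"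

definition a_norm :: "(real \<Rightarrow> real) \<Rightarrow> (real \<Rightarrow> complex) \<Rightarrow> real" where
  "a_norm a q = (LINT x:{0<..}|lborel. a x * cmod (q x))"

definition a_hat :: "(real \<Rightarrow> real) \<Rightarrow> real \<Rightarrow> real" where
  "a_hat a x = x / a x"

text \<open>rho = inf {t>0 : a_hat(sqrt t) >= log 2 / ||q||_a}, in ereal (inf of empty = inf,
  log 2 / 0 = inf).\<close>
definition rho :: "(real \<Rightarrow> real) \<Rightarrow> (real \<Rightarrow> complex) \<Rightarrow> ereal" where
  "rho a q = Inf {ereal t | t. t > 0 \<and>
      ereal (a_hat a (sqrt t)) \<ge> ereal (ln 2) / ereal (a_norm a q)}"

end

theory Submission
  imports Defs "HOL-Real_Asymp.Real_Asymp"
begin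

text \<open>
  Write \<open>\<lambda> = k\<^sup>2\<close> with \<open>Im k > 0\<close> and put \<open>r = 1 / |k|\<close>. For \<open>0 \<le> x \<le> X\<close>, a solution of
  \<open>-y'' + q y = k\<^sup>2 y\<close> with \<open>y(0) = 0\<close> satisfies
  \<open>y(x) = sin(k x)/k * exp(i k X) (y'(X) - i k y(X)) - \<integral> G(x,s) q(s) y(s) ds\<close> (over \<open>[0, X]\<close>),
  where the free Dirichlet Green kernel obeys \<open>|G(x,s)| \<le> min(x, r)\<close> and the boundary term carries
  the factor \<open>exp(-Im k (X - x))\<close>. Hence \<open>u(x) = |y(x)| / min(x, r)\<close> satisfies
  \<open>sup u \<le> M sup u\<close> with \<open>M = \<integral> min(s, r) |q(s)| ds\<close> as soon as \<open>sup u\<close> is finite, and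
  finiteness follows from \<open>y \<in> L\<^sup>2\<close> by a bootstrap on the windows \<open>[X - 1, X]\<close>. So an eigenvalue
  forces \<open>M \<ge> 1\<close>. Monotonicity of \<open>a\<close> and of \<open>a_hat a\<close> gives \<open>min(s, r) \<le> a_hat a r * a(s)\<close>,
  whence \<open>a_hat a (|\<lambda>|\<^sup>-\<^sup>1\<^sup>/\<^sup>2) * \<parallel>q\<parallel>\<^sub>a \<ge> 1 > log 2\<close>, i.e. \<open>|\<lambda>| \<le> 1 / \<rho>\<close>.
\<close>

section \<open>Integrals over intervals\<close>

lemma set_integrable_mult_continuous:
  fixes h \<phi> :: "real \<Rightarrow> complex"
  assumes h: "set_integrable lborel {a..b} h" and \<phi>: "continuous_on {a..b} \<phi>"
  shows "set_integrable lborel {a..b} (\<lambda>t. \<phi> t * h t)"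
proof -
  obtain B where B: "\<And>t. t \<in> {a..b} \<Longrightarrow> norm (\<phi> t) \<le> B"
    using continuous_on_compact_bound[OF compact_Icc \<phi>] by blast
  have "(\<lambda>t. indicator {a..b} t *\<^sub>R \<phi> t) \<in> borel_measurable lborel"
    using \<phi> by (simp add: borel_measurable_continuous_on_indicator)
  moreover have "(\<lambda>t. indicator {a..b} t *\<^sub>R h t) \<in> borel_measurable lborel"
    using h unfolding set_integrable_def by (rule borel_measurable_integrable)
  ultimately have "set_borel_measurable lborel {a..b} (\<lambda>t. \<phi> t * h t)"
    unfolding set_borel_measurable_def
    by (rule borel_measurable_times[THEN measurable_cong[THEN iffD1, rotated]]) (auto simp: indicator_def)
  then show ?thesis
    using B by (intro set_integrable_bound[OF set_integrable_mult_right[OF h, of B]])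
      (auto simp: norm_mult intro!: AE_I2 mult_right_mono order.trans[OF _ abs_ge_self])
qed

lemma integrable_lborel_pair_bound:
  fixes F :: "real \<times> real \<Rightarrow> 'b::{banach, second_countable_topology}"
  assumes F: "F \<in> borel_measurable (lborel \<Otimes>\<^sub>M lborel)" and g: "integrable lborel g"
    and bound: "\<And>s t. norm (F (s, t)) \<le> indicator {a..b} t * g s"
  shows "integrable (lborel \<Otimes>\<^sub>M lborel) F"
proof (rule lborel_pair.Fubini_integrable[OF F])
  note F[measurable]
  have box_int: "integrable lborel (\<lambda>t. indicator {a..b} t * c)" for c :: real
    by (intro integrable_mult_left) (simp add: integrable_indicator_iff emeasure_lborel_Icc_eq)
  have inner: "integrable lborel (\<lambda>t. F (s, t))" for s
    using F bound by (intro Bochner_Integration.integrable_bound[OF box_int[of "g s"]])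
      (auto intro!: AE_I2 intro: order.trans[OF _ abs_ge_self])
  then show "AE s in lborel. integrable lborel (\<lambda>t. F (s, t))"
    by simp
  show "integrable lborel (\<lambda>s. \<integral>t. norm (F (s, t)) \<partial>lborel)"
  proof (rule Bochner_Integration.integrable_bound)
    show "integrable lborel (\<lambda>s. \<bar>b - a\<bar> * g s)"
      using g by (rule integrable_mult_right)
    have "(\<integral>t. norm (F (s, t)) \<partial>lborel) \<le> (\<integral>t. indicator {a..b} t * g s \<partial>lborel)" for s
      using inner by (intro integral_mono box_int bound) auto
    moreover have "(\<integral>t. indicator {a..b} t * g s \<partial>lborel) \<le> \<bar>b - a\<bar> * \<bar>g s\<bar>" for s
      by (cases "a \<le> b") (auto intro: mult_left_mono)
    ultimately show "AE s in lborel. norm (\<integral>t. norm (F (s, t)) \<partial>lborel) \<le> norm (\<bar>b - a\<bar> * g s)"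
      by (auto intro!: AE_I2 simp: integral_nonneg_AE abs_mult intro: order.trans)
  qed measurable
qed

lemma integrable_triangle_product:
  fixes h \<phi> :: "real \<Rightarrow> complex"
  assumes h: "set_integrable lborel {a..b} h" and \<phi>: "continuous_on {a..b} \<phi>"
  shows "integrable (lborel \<Otimes>\<^sub>M lborel)
           (\<lambda>(s, t). if a \<le> s \<and> s \<le> t \<and> t \<le> b then \<phi> t * h s else 0)"
proof -
  define ph where "ph t = indicator {a..b} t *\<^sub>R \<phi> t" for t
  define hh where "hh s = indicator {a..b} s *\<^sub>R h s" for s
  have [measurable]: "ph \<in> borel_measurable lborel"
    unfolding ph_def using \<phi> by (simp add: borel_measurable_continuous_on_indicator)
  have [measurable]: "hh \<in> borel_measurable lborel"
    using h unfolding hh_def set_integrable_def by (rule borel_measurable_integrable)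
  have F_eq: "(if a \<le> s \<and> s \<le> t \<and> t \<le> b then \<phi> t * h s else 0)
      = (if a \<le> s \<and> s \<le> t \<and> t \<le> b then 1 else 0::real) *\<^sub>R (ph t * hh s)" for s t
    by (auto simp: ph_def hh_def)
  obtain B where "0 \<le> B" "\<And>t. t \<in> {a..b} \<Longrightarrow> norm (\<phi> t) \<le> B"
    using continuous_on_compact_bound[OF compact_Icc \<phi>] by blast
  then have bound: "norm (if a \<le> s \<and> s \<le> t \<and> t \<le> b then \<phi> t * h s else 0)
      \<le> indicator {a..b} t * (B * norm (hh s))" for s t
    by (auto simp: hh_def norm_mult indicator_def intro!: mult_right_mono)
  show ?thesis
  proof (rule integrable_lborel_pair_bound[where a=a and b=b])
    show "(\<lambda>(s, t). if a \<le> s \<and> s \<le> t \<and> t \<le> b then \<phi> t * h s else 0) \<in> borel_measurable (lborel \<Otimes>\<^sub>M lborel)"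
      unfolding F_eq by measurable
    show "integrable lborel (\<lambda>s. B * norm (hh s))"
      using h unfolding hh_def set_integrable_def by (intro integrable_mult_right integrable_norm)
  qed (simp add: bound)
qed

lemma set_integral_triangle_swap:
  fixes h \<phi> :: "real \<Rightarrow> complex"
  assumes h: "set_integrable lborel {a..b} h" and \<phi>: "continuous_on {a..b} \<phi>"
  shows "(LINT s:{a..b}|lborel. (LINT t:{s..b}|lborel. \<phi> t) * h s)
       = (LINT t:{a..b}|lborel. \<phi> t * (LINT s:{a..t}|lborel. h s))"
proof -
  define F where "F s t = (if a \<le> s \<and> s \<le> t \<and> t \<le> b then \<phi> t * h s else 0)" for s t
  have outer_s: "indicator {a..b} s *\<^sub>R ((LINT t:{s..b}|lborel. \<phi> t) * h s) = (\<integral>t. F s t \<partial>lborel)" for s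
  proof -
    have "F s = (\<lambda>t. indicator {a..b} s *\<^sub>R ((indicator {s..b} t *\<^sub>R \<phi> t) * h s))"
      by (auto simp: F_def indicator_def fun_eq_iff)
    then show ?thesis
      unfolding set_lebesgue_integral_def by (simp only: integral_scaleR_right integral_mult_left_zero)
  qed
  have outer_t: "indicator {a..b} t *\<^sub>R (\<phi> t * (LINT s:{a..t}|lborel. h s)) = (\<integral>s. F s t \<partial>lborel)" for t
  proof -
    have "(\<lambda>s. F s t) = (\<lambda>s. indicator {a..b} t *\<^sub>R (\<phi> t * (indicator {a..t} s *\<^sub>R h s)))"
      by (auto simp: F_def indicator_def fun_eq_iff)
    then show ?thesis
      unfolding set_lebesgue_integral_def by (simp only: integral_scaleR_right integral_mult_right_zero)
  qed
  have "(\<integral>t. (\<integral>s. F s t \<partial>lborel) \<partial>lborel) = (\<integral>s. (\<integral>t. F s t \<partial>lborel) \<partial>lborel)"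
    using lborel_pair.Fubini_integral[OF integrable_triangle_product[OF h \<phi>]] by (simp add: F_def)
  then show ?thesis
    unfolding set_lebesgue_integral_def[of _ "{a..b}"] outer_s outer_t by simp
qed

lemma set_integral_by_parts_indefinite:
  fixes h E E' :: "real \<Rightarrow> complex"
  assumes h: "set_integrable lborel {a..b} h" and "a \<le> b"
    and E: "\<And>t. t \<in> {a..b} \<Longrightarrow> (E has_vector_derivative E' t) (at t within {a..b})"
    and E': "continuous_on {a..b} E'"
  shows "(LINT s:{a..b}|lborel. E s * h s)
       = E b * (LINT s:{a..b}|lborel. h s) - (LINT t:{a..b}|lborel. E' t * (LINT s:{a..t}|lborel. h s))"
proof -
  have E_cont: "continuous_on {a..b} E"
    using E by (rule continuous_on_vector_derivative)
  have "(LINT t:{a..b}|lborel. E' t * (LINT s:{a..t}|lborel. h s))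
      = (LINT s:{a..b}|lborel. (LINT t:{s..b}|lborel. E' t) * h s)"
    by (rule set_integral_triangle_swap[OF h E', symmetric])
  also have "\<dots> = (LINT s:{a..b}|lborel. E b * h s - E s * h s)"
  proof (rule set_lebesgue_integral_cong)
    show "\<forall>s. s \<in> {a..b} \<longrightarrow> (LINT t:{s..b}|lborel. E' t) * h s = E b * h s - E s * h s"
    proof (intro allI impI)
      fix s assume s: "s \<in> {a..b}"
      have "(E has_vector_derivative E' t) (at t within {s..b})" if "t \<in> {s..b}" for t
        using E[of t] s that by (auto intro: has_vector_derivative_within_subset)
      then have "(LINT t:{s..b}|lborel. E' t) = E b - E s"
        using s continuous_on_subset[OF E'] unfolding set_lebesgue_integral_def
        by (intro integral_FTC_atLeastAtMost) auto
      then show "(LINT t:{s..b}|lborel. E' t) * h s = E b * h s - E s * h s"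
        by (simp only: left_diff_distrib)
    qed
  qed simp
  also have "\<dots> = E b * (LINT s:{a..b}|lborel. h s) - (LINT s:{a..b}|lborel. E s * h s)"
    using h set_integrable_mult_continuous[OF h E_cont] by (simp add: set_integral_diff)
  finally show ?thesis by simp
qed

lemma set_integral_mono_set:
  fixes f :: "'a \<Rightarrow> real"
  assumes "set_integrable M B f" "A \<subseteq> B" "A \<in> sets M" "\<And>x. x \<in> B \<Longrightarrow> 0 \<le> f x"
  shows "(LINT x:A|M. f x) \<le> (LINT x:B|M. f x)"
  using set_integrable_subset[OF assms(1,3,2)] assms(1) assms(2,4)
  unfolding set_lebesgue_integral_def set_integrable_def
  by (intro integral_mono) (auto simp: indicator_def)

lemma set_integral_const_Icc [simp]:
  fixes c :: "'a::{banach, second_countable_topology}"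
  shows "a \<le> b \<Longrightarrow> (LINT t:{a..b}|lborel. c) = (b - a) *\<^sub>R c"
  by (simp add: set_integral_const)

lemma exists_le_set_integral_Icc:
  fixes g :: "real \<Rightarrow> real"
  assumes "a \<le> b" and g: "continuous_on {a..b} g"
  obtains t where "t \<in> {a..b}" "(b - a) * g t \<le> (LINT s:{a..b}|lborel. g s)"
proof -
  obtain t where t: "t \<in> {a..b}" "\<And>s. s \<in> {a..b} \<Longrightarrow> g t \<le> g s"
    using continuous_attains_inf[OF compact_Icc _ g] \<open>a \<le> b\<close> by auto
  have "(b - a) * g t = (LINT s:{a..b}|lborel. g t)"
    using \<open>a \<le> b\<close> by simp
  also have "\<dots> \<le> (LINT s:{a..b}|lborel. g s)"
    using t g by (intro set_integral_mono borel_integrable_atLeastAtMost') auto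
  finally show thesis
    using that t(1) by blast
qed

lemma set_integral_norm_le_half:
  fixes f :: "real \<Rightarrow> 'a::{banach, second_countable_topology}"
  assumes "a \<le> b" and f: "continuous_on {a..b} f"
  shows "(LINT t:{a..b}|lborel. norm (f t)) \<le> ((b - a) + (LINT t:{a..b}|lborel. (norm (f t))\<^sup>2)) / 2"
proof -
  have "(LINT t:{a..b}|lborel. norm (f t)) \<le> (LINT t:{a..b}|lborel. (1 + (norm (f t))\<^sup>2) / 2)"
  proof (rule set_integral_mono)
    fix t
    have "0 \<le> (norm (f t) - 1)\<^sup>2" by simp
    then show "norm (f t) \<le> (1 + (norm (f t))\<^sup>2) / 2"
      by (simp add: power2_eq_square algebra_simps)
  qed (auto intro!: borel_integrable_atLeastAtMost' continuous_intros f)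
  also have "\<dots> = ((b - a) + (LINT t:{a..b}|lborel. (norm (f t))\<^sup>2)) / 2"
    using \<open>a \<le> b\<close> f
    by (simp add: set_integral_add set_integral_divide_zero borel_integrable_atLeastAtMost' continuous_intros
                  add_divide_distrib)
  finally show ?thesis .
qed

lemma norm_derivative_minus_secant_le:
  fixes f f' :: "real \<Rightarrow> 'a::banach"
  assumes "a \<le> b"
    and f: "\<And>s. s \<in> {a..b} \<Longrightarrow> (f has_vector_derivative f' s) (at s within {a..b})"
    and B: "\<And>s. s \<in> {a..b} \<Longrightarrow> norm (f' b - f' s) \<le> B"
  shows "norm ((b - a) *\<^sub>R f' b - (f b - f a)) \<le> B * (b - a)"
proof -
  have "(f' has_integral (f b - f a)) {a..b}"
    by (rule fundamental_theorem_of_calculus[OF \<open>a \<le> b\<close> f])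
  then have "((\<lambda>s. f' b - f' s) has_integral ((b - a) *\<^sub>R f' b - (f b - f a))) {a..b}"
    using has_integral_diff[OF has_integral_const_real[of "f' b" a b]] \<open>a \<le> b\<close> by simp
  moreover have "0 \<le> B"
    using B[of b] \<open>a \<le> b\<close> by (simp add: order.trans[OF norm_ge_zero])
  ultimately have "norm ((b - a) *\<^sub>R f' b - (f b - f a)) \<le> B * Henstock_Kurzweil_Integration.content {a..b}"
    using B by (intro has_integral_bound_real[OF _ finite.emptyI]) auto
  then show ?thesis
    using \<open>a \<le> b\<close> by simp
qed

lemma norm_square_increment_le:
  fixes f f' :: "real \<Rightarrow> complex"
  assumes "t \<le> x"
    and f: "\<And>s. s \<in> {t..x} \<Longrightarrow> (f has_vector_derivative f' s) (at s within {t..x})"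
    and P: "\<And>s. s \<in> {t..x} \<Longrightarrow> norm (f' s) \<le> P"
  shows "(norm (f x))\<^sup>2 - (norm (f t))\<^sup>2 \<le> 2 * P * (LINT s:{t..x}|lborel. norm (f s))"
proof -
  define F where "F s = f s * cnj (f' s) + f' s * cnj (f s)" for s
  have f_cont: "continuous_on {t..x} f"
    using f by (rule continuous_on_vector_derivative)
  have "(F has_integral (f x * cnj (f x) - f t * cnj (f t))) {t..x}"
    unfolding F_def using \<open>t \<le> x\<close>
    by (intro fundamental_theorem_of_calculus has_vector_derivative_mult f has_vector_derivative_cnj)
      auto
  then have "(norm (f x))\<^sup>2 - (norm (f t))\<^sup>2 = Re (integral {t..x} F)"
    by (simp add: integral_unique flip: complex_norm_square)
  also have "\<dots> \<le> norm (integral {t..x} F)"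
    by (rule complex_Re_le_cmod)
  also have "\<dots> \<le> integral {t..x} (\<lambda>s. 2 * P * norm (f s))"
  proof (rule integral_norm_bound_integral)
    show "F integrable_on {t..x}"
      using \<open>(F has_integral _) _\<close> by blast
    show "(\<lambda>s. 2 * P * norm (f s)) integrable_on {t..x}"
      by (intro integrable_continuous_interval continuous_intros f_cont)
    fix s assume s: "s \<in> {t..x}"
    have "norm (F s) \<le> 2 * (norm (f' s) * norm (f s))"
      unfolding F_def using norm_triangle_ineq[of "f s * cnj (f' s)" "f' s * cnj (f s)"]
      by (simp add: norm_mult mult.commute)
    also have "\<dots> \<le> 2 * (P * norm (f s))"
      using P[OF s] by (intro mult_left_mono mult_right_mono) auto
    finally show "norm (F s) \<le> 2 * P * norm (f s)" by simp
  qed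
  also have "\<dots> = 2 * P * (LINT s:{t..x}|lborel. norm (f s))"
    using f_cont by (simp add: set_borel_integral_eq_integral borel_integrable_atLeastAtMost' continuous_intros)
  finally show ?thesis .
qed

lemma tendsto_exp_neg_mult_at_top:
  fixes \<beta> :: real
  assumes "0 < \<beta>"
  shows "((\<lambda>t. exp (- \<beta> * (t - s)) * D + c) \<longlongrightarrow> c) at_top"
  using assms by real_asymp

lemma le_max_affine_sqrt_imp_le:
  fixes v \<theta> C D1 D2 :: real
  assumes v: "v \<le> max (\<theta> * v + C) (sqrt (D1 * v + D2))"
    and "\<theta> < 1" "0 \<le> D1" "0 \<le> D2"
  shows "v \<le> max (C / (1 - \<theta>)) (max 1 (D1 + D2))"
proof (rule ccontr)
  assume "\<not> ?thesis"
  then have big: "C / (1 - \<theta>) < v" "1 < v" "D1 + D2 < v" by auto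
  have "\<theta> * v + C < v"
    using big(1) \<open>\<theta> < 1\<close> by (simp add: divide_less_eq algebra_simps)
  moreover have "sqrt (D1 * v + D2) < v"
  proof -
    have "D1 * v + D2 \<le> (D1 + D2) * v"
      using mult_left_mono[of 1 v D2] big \<open>0 \<le> D2\<close> by (simp add: algebra_simps)
    also have "\<dots> < v\<^sup>2"
      using big by (simp add: power2_eq_square mult_strict_right_mono)
    finally have "sqrt (D1 * v + D2) < sqrt (v\<^sup>2)"
      by (rule real_sqrt_less_mono)
    then show ?thesis
      using big by simp
  qed
  ultimately show False
    using v by linarith
qed

section \<open>Plane waves and the free Dirichlet Green kernel\<close>

definition plane_wave :: "complex \<Rightarrow> real \<Rightarrow> complex" where
  "plane_wave k s = exp (\<i> * k * of_real s)"

text \<open>\<open>dirichlet_sine k x = sin (k x) / k\<close>, and \<open>green k\<close> is the kernel of the resolvent of the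
  free Dirichlet Laplacian on the half-line at \<open>k\<^sup>2\<close>.\<close>

definition dirichlet_sine :: "complex \<Rightarrow> real \<Rightarrow> complex" where
  "dirichlet_sine k x = (plane_wave k x - plane_wave k (- x)) / (2 * \<i> * k)"

definition green :: "complex \<Rightarrow> real \<Rightarrow> real \<Rightarrow> complex" where
  "green k x s = plane_wave k (max x s) * dirichlet_sine k (min x s)"

lemma plane_wave_add: "plane_wave k a * plane_wave k b = plane_wave k (a + b)"
  by (simp add: plane_wave_def exp_add[symmetric] algebra_simps)

lemma plane_wave_0 [simp]: "plane_wave k 0 = 1"
  by (simp add: plane_wave_def)

lemma plane_wave_uminus: "plane_wave (- k) s = plane_wave k (- s)"
  by (simp add: plane_wave_def)

lemma norm_plane_wave: "norm (plane_wave k a) = exp (- Im k * a)"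
  by (simp add: plane_wave_def)

lemma plane_wave_has_vector_derivative:
  "(plane_wave k has_vector_derivative (\<i> * k * plane_wave k s)) (at s within S)"
proof -
  have "((\<lambda>z. exp (\<i> * k * z)) has_field_derivative (\<i> * k * exp (\<i> * k * of_real s))) (at (of_real s))"
    by (auto intro!: derivative_eq_intros)
  from has_vector_derivative_real_field[OF this] show ?thesis
    unfolding plane_wave_def[abs_def] by (rule has_vector_derivative_at_within)
qed

lemma continuous_on_plane_wave [continuous_intros]:
  "continuous_on S f \<Longrightarrow> continuous_on S (\<lambda>s. plane_wave k (f s))"
  unfolding plane_wave_def by (intro continuous_intros)

lemma norm_plane_wave_minus_one_le:
  assumes "0 \<le> Im k" "0 \<le> a"
  shows "norm (plane_wave k a - 1) \<le> min (norm k * a) 2"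
proof -
  have "((\<lambda>t. \<i> * k * plane_wave k t) has_integral (plane_wave k a - plane_wave k 0)) {0..a}"
    using \<open>0 \<le> a\<close> by (intro fundamental_theorem_of_calculus plane_wave_has_vector_derivative)
  moreover have "norm (\<i> * k * plane_wave k t) \<le> norm k" if "t \<in> {0..a}" for t
    using assms that by (simp add: norm_mult norm_plane_wave mult_left_le)
  ultimately have "norm (plane_wave k a - 1) \<le> norm k * Henstock_Kurzweil_Integration.content {0..a}"
    by (intro has_integral_bound_real[OF _ finite.emptyI]) auto
  moreover have "norm (plane_wave k a - 1) \<le> norm (plane_wave k a) + 1"
    using norm_triangle_ineq4[of "plane_wave k a" 1] by simp
  moreover have "norm (plane_wave k a) \<le> 1"
    using assms by (simp add: norm_plane_wave)
  ultimately show ?thesis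
    using assms by simp
qed

lemma norm_plane_wave_mult_sine_le:
  assumes k: "0 < Im k" and "0 \<le> b" "b \<le> a"
  shows "norm (plane_wave k a * dirichlet_sine k b) \<le> exp (- Im k * (a - b)) * min b (1 / norm k)"
proof -
  have k0: "k \<noteq> 0" using k by auto
  have "plane_wave k a * dirichlet_sine k b = plane_wave k (a - b) * (plane_wave k (2 * b) - 1) / (2 * \<i> * k)"
    unfolding dirichlet_sine_def by (simp add: plane_wave_add algebra_simps flip: mult_2)
  then have "norm (plane_wave k a * dirichlet_sine k b)
      = exp (- Im k * (a - b)) * (norm (plane_wave k (2 * b) - 1) / (2 * norm k))"
    by (simp add: norm_mult norm_divide norm_plane_wave)
  also have "norm (plane_wave k (2 * b) - 1) / (2 * norm k) \<le> min b (1 / norm k)"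
    using norm_plane_wave_minus_one_le[of k "2 * b"] k k0 \<open>0 \<le> b\<close>
    by (simp add: divide_le_eq min_def field_simps split: if_splits)
  finally show ?thesis
    by (simp add: mult_left_mono)
qed

lemma norm_green_le:
  assumes "0 < Im k" "0 \<le> x" "0 \<le> s"
  shows "norm (green k x s) \<le> min x (1 / norm k)"
proof -
  have "norm (green k x s) \<le> exp (- Im k * (max x s - min x s)) * min (min x s) (1 / norm k)"
    unfolding green_def using assms by (intro norm_plane_wave_mult_sine_le) auto
  also have "\<dots> \<le> 1 * min x (1 / norm k)"
    using assms by (intro mult_mono) auto
  finally show ?thesis by simp
qed

lemma continuous_on_green [continuous_intros]: "k \<noteq> 0 \<Longrightarrow> continuous_on S (green k x)"
  unfolding green_def dirichlet_sine_def by (intro continuous_intros) auto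

section \<open>Solutions of the Dirichlet problem off the positive half-line\<close>

locale dirichlet_solution =
  fixes q y y' :: "real \<Rightarrow> complex" and k :: complex
  assumes y_0: "y 0 = 0"
    and has_derivative_y: "\<And>x. 0 \<le> x \<Longrightarrow> (y has_vector_derivative y' x) (at x within {0..})"
    and integrable_equation: "\<And>x. 0 \<le> x \<Longrightarrow> set_integrable lborel {0..x} (\<lambda>t. (q t - k\<^sup>2) * y t)"
    and y'_eq: "\<And>x. 0 \<le> x \<Longrightarrow> y' x = y' 0 + (LINT t:{0..x}|lborel. (q t - k\<^sup>2) * y t)"
    and Im_k_pos: "0 < Im k"
begin

lemma k_nonzero: "k \<noteq> 0"
  using Im_k_pos by auto

lemma has_derivative_y_Icc:
  "0 \<le> a \<Longrightarrow> t \<in> {a..b} \<Longrightarrow> (y has_vector_derivative y' t) (at t within {a..b})"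
  by (rule has_vector_derivative_within_subset[OF has_derivative_y]) auto

lemma continuous_on_y: "0 \<le> a \<Longrightarrow> continuous_on {a..b} y"
  by (rule continuous_on_vector_derivative) (rule has_derivative_y_Icc)

lemma continuous_on_y': "0 \<le> a \<Longrightarrow> continuous_on {a..b} y'"
proof (cases "a \<le> b")
  case True
  assume "0 \<le> a"
  have "continuous_on {0..b} (\<lambda>t. y' 0 + integral {0..t} (\<lambda>s. (q s - k\<^sup>2) * y s))"
    using set_borel_integral_eq_integral(1)[OF integrable_equation] \<open>0 \<le> a\<close> True
    by (intro continuous_on_add continuous_on_const indefinite_integral_continuous_1) auto
  moreover have "y' 0 + integral {0..t} (\<lambda>s. (q s - k\<^sup>2) * y s) = y' t" if "t \<in> {0..b}" for t
    using y'_eq[of t] that set_borel_integral_eq_integral(2)[OF integrable_equation[of t]] by simp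
  ultimately have "continuous_on {0..b} y'"
    by (rule continuous_on_eq)
  then show ?thesis
    by (rule continuous_on_subset) (use \<open>0 \<le> a\<close> in auto)
qed simp

lemma set_integrable_qy: "0 \<le> a \<Longrightarrow> set_integrable lborel {a..b} (\<lambda>t. q t * y t)"
proof (cases "a \<le> b")
  case True
  assume "0 \<le> a"
  have "set_integrable lborel {a..b} (\<lambda>t. (q t - k\<^sup>2) * y t + k\<^sup>2 * y t)"
    using \<open>0 \<le> a\<close> True
    by (intro set_integral_add(1) set_integrable_subset[OF integrable_equation[of b]]
          set_integrable_mult_right borel_integrable_atLeastAtMost' continuous_on_y) auto
  then show ?thesis
    by (simp add: algebra_simps)
qed (simp add: set_integrable_def)

lemma y'_increment:
  assumes "0 \<le> s" "s \<le> t"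
  shows "y' t - y' s = (LINT u:{s<..t}|lborel. (q u - k\<^sup>2) * y u)"
proof -
  have "{0..t} = {0..s} \<union> {s<..t}" using assms by auto
  then have "(LINT u:{0..t}|lborel. (q u - k\<^sup>2) * y u)
      = (LINT u:{0..s}|lborel. (q u - k\<^sup>2) * y u) + (LINT u:{s<..t}|lborel. (q u - k\<^sup>2) * y u)"
    using assms
    by (simp only:) (rule set_integral_Un; auto intro: set_integrable_subset[OF integrable_equation[of t]])
  then show ?thesis
    using y'_eq[of t] y'_eq[of s] assms by simp
qed

lemma set_integral_mult_equation:
  assumes "0 \<le> x"
    and E: "\<And>t. t \<in> {0..x} \<Longrightarrow> (E has_vector_derivative E' t) (at t within {0..x})"
    and E': "continuous_on {0..x} E'"
  shows "(LINT s:{0..x}|lborel. E s * ((q s - k\<^sup>2) * y s))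
       = E x * (y' x - y' 0) - (LINT t:{0..x}|lborel. E' t * (y' t - y' 0))"
proof -
  have y'_minus_y'_0: "(LINT s:{0..t}|lborel. (q s - k\<^sup>2) * y s) = y' t - y' 0" if "0 \<le> t" for t
    using y'_eq[OF that] by simp
  have "(LINT t:{0..x}|lborel. E' t * (LINT s:{0..t}|lborel. (q s - k\<^sup>2) * y s))
      = (LINT t:{0..x}|lborel. E' t * (y' t - y' 0))"
    by (rule set_lebesgue_integral_cong) (auto simp: y'_minus_y'_0)
  then show ?thesis
    using set_integral_by_parts_indefinite[OF integrable_equation[OF \<open>0 \<le> x\<close>] \<open>0 \<le> x\<close> E E']
    by (simp add: y'_minus_y'_0[OF \<open>0 \<le> x\<close>])
qed

lemma set_integral_mult_y':
  assumes "0 \<le> x"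
    and E: "\<And>t. t \<in> {0..x} \<Longrightarrow> (E has_vector_derivative E' t) (at t within {0..x})"
    and E': "continuous_on {0..x} E'"
  shows "(LINT t:{0..x}|lborel. E t * y' t) = E x * y x - (LINT t:{0..x}|lborel. E' t * y t)"
proof -
  have E_cont: "continuous_on {0..x} E"
    using E by (rule continuous_on_vector_derivative)
  have "((\<lambda>t. E t * y t) has_vector_derivative E t * y' t + E' t * y t) (at t within {0..x})"
    if "t \<in> {0..x}" for t
    by (rule has_vector_derivative_mult[OF E[OF that] has_derivative_y_Icc[OF order.refl that]])
  moreover have "continuous_on {0..x} (\<lambda>t. E t * y' t + E' t * y t)"
    by (intro continuous_on_add continuous_on_mult E_cont E' continuous_on_y continuous_on_y' order.refl)
  ultimately have "(LINT t:{0..x}|lborel. E t * y' t + E' t * y t) = E x * y x - E 0 * y 0"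
    unfolding set_lebesgue_integral_def using \<open>0 \<le> x\<close> by (intro integral_FTC_atLeastAtMost) auto
  moreover have "set_integrable lborel {0..x} (\<lambda>t. E t * y' t)" "set_integrable lborel {0..x} (\<lambda>t. E' t * y t)"
    by (intro borel_integrable_atLeastAtMost' continuous_on_mult E_cont E' continuous_on_y continuous_on_y'
        order.refl)+
  ultimately show ?thesis
    by (simp add: y_0 set_integral_add eq_diff_eq)
qed

text \<open>Formally \<open>(exp (i \<kappa> x) (y' - i \<kappa> y))' = exp (i \<kappa> x) q y\<close>; as \<open>y'\<close> is only an indefinite
  integral, this derivative is replaced by the two integrations by parts above.\<close>

lemma jost_identity:
  assumes "\<kappa>\<^sup>2 = k\<^sup>2" and "0 \<le> x"
  shows "plane_wave \<kappa> x * (y' x - \<i> * \<kappa> * y x)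
       = y' 0 + (LINT s:{0..x}|lborel. plane_wave \<kappa> s * (q s * y s))"
proof -
  define E where "E = plane_wave \<kappa>"
  define c where "c = y' 0"
  have E_deriv: "(E has_vector_derivative \<i> * \<kappa> * E t) (at t within S)" for t S
    unfolding E_def by (rule plane_wave_has_vector_derivative)
  have E_cont: "continuous_on S E" for S
    unfolding E_def by (intro continuous_intros)
  have E'_cont: "continuous_on S (\<lambda>t. \<i> * \<kappa> * E t)" for S
    by (intro continuous_on_mult continuous_on_const E_cont)
  have int: "set_integrable lborel {0..x} (\<lambda>t. E t * y t)" "set_integrable lborel {0..x} (\<lambda>t. E t * y' t)"
    "set_integrable lborel {0..x} E" "set_integrable lborel {0..x} (\<lambda>t. E t * ((q t - k\<^sup>2) * y t))"
    by (intro borel_integrable_atLeastAtMost' continuous_on_mult E_cont continuous_on_y continuous_on_y'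
          order.refl set_integrable_mult_continuous[OF integrable_equation[OF \<open>0 \<le> x\<close>]])+
  have "(\<lambda>s. E s * (q s * y s)) = (\<lambda>s. E s * ((q s - k\<^sup>2) * y s) + \<kappa>\<^sup>2 * (E s * y s))"
    by (auto simp: algebra_simps assms(1))
  then have "(LINT s:{0..x}|lborel. E s * (q s * y s))
      = (LINT s:{0..x}|lborel. E s * ((q s - k\<^sup>2) * y s)) + \<kappa>\<^sup>2 * (LINT s:{0..x}|lborel. E s * y s)"
    using int by (simp add: set_integral_add)
  also have "(LINT s:{0..x}|lborel. E s * ((q s - k\<^sup>2) * y s))
      = E x * (y' x - c) - (\<i> * \<kappa> * (LINT t:{0..x}|lborel. E t * y' t) - c * (\<i> * \<kappa> * (LINT t:{0..x}|lborel. E t)))"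
    unfolding set_integral_mult_equation[OF \<open>0 \<le> x\<close> E_deriv E'_cont] c_def using int
    by (simp add: algebra_simps set_integral_diff flip: set_integral_mult_right)
  also have "(LINT t:{0..x}|lborel. E t * y' t) = E x * y x - \<i> * \<kappa> * (LINT t:{0..x}|lborel. E t * y t)"
    unfolding set_integral_mult_y'[OF \<open>0 \<le> x\<close> E_deriv E'_cont] by (simp add: mult.assoc)
  also have "\<i> * \<kappa> * (LINT t:{0..x}|lborel. E t) = E x - E 0"
  proof -
    have "(LINT t:{0..x}|lborel. \<i> * \<kappa> * E t) = E x - E 0"
      unfolding set_lebesgue_integral_def using \<open>0 \<le> x\<close>
      by (intro integral_FTC_atLeastAtMost E_deriv E'_cont)
    then show ?thesis
      by simp
  qed
  finally show ?thesis
    by (simp add: E_def c_def algebra_simps power2_eq_square)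
qed

lemma set_integral_qy_split:
  assumes "0 \<le> x" "x \<le> X" "continuous_on {0..X} \<phi>"
  shows "(LINT s:{0..X}|lborel. \<phi> s * (q s * y s))
       = (LINT s:{0..x}|lborel. \<phi> s * (q s * y s)) + (LINT s:{x<..X}|lborel. \<phi> s * (q s * y s))"
proof -
  have "{0..X} = {0..x} \<union> {x<..X}" using assms by auto
  moreover have "set_integrable lborel {0..X} (\<lambda>s. \<phi> s * (q s * y s))"
    by (rule set_integrable_mult_continuous[OF set_integrable_qy[OF order.refl] assms(3)])
  ultimately show ?thesis
    using assms by (simp only:) (rule set_integral_Un; auto intro: set_integrable_subset)
qed

lemma set_integral_green_qy:
  assumes "0 \<le> x" "x \<le> X"
  shows "(LINT s:{0..X}|lborel. green k x s * (q s * y s))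
       = plane_wave k x / (2 * \<i> * k) * ((LINT s:{0..x}|lborel. plane_wave k s * (q s * y s))
                                         - (LINT s:{0..x}|lborel. plane_wave k (- s) * (q s * y s)))
         + dirichlet_sine k x * (LINT s:{x<..X}|lborel. plane_wave k s * (q s * y s))"
proof -
  have "(LINT s:{0..x}|lborel. green k x s * (q s * y s))
      = (LINT s:{0..x}|lborel. plane_wave k x / (2 * \<i> * k)
                               * (plane_wave k s * (q s * y s) - plane_wave k (- s) * (q s * y s)))"
    by (rule set_lebesgue_integral_cong) (auto simp: green_def dirichlet_sine_def field_simps)
  also have "\<dots> = plane_wave k x / (2 * \<i> * k) * ((LINT s:{0..x}|lborel. plane_wave k s * (q s * y s))
                                         - (LINT s:{0..x}|lborel. plane_wave k (- s) * (q s * y s)))"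
    using assms by (simp add: set_integral_diff set_integrable_mult_continuous set_integrable_qy continuous_intros)
  moreover have "(LINT s:{x<..X}|lborel. green k x s * (q s * y s))
      = (LINT s:{x<..X}|lborel. dirichlet_sine k x * (plane_wave k s * (q s * y s)))"
    by (rule set_lebesgue_integral_cong) (auto simp: green_def)
  ultimately show ?thesis
    using set_integral_qy_split[OF assms continuous_on_green[OF k_nonzero]] by simp
qed

lemma green_representation:
  assumes "0 \<le> x" "x \<le> X"
  shows "y x = dirichlet_sine k x * (plane_wave k X * (y' X - \<i> * k * y X))
             - (LINT s:{0..X}|lborel. green k x s * (q s * y s))"
proof -
  define c where "c = y' 0"
  define I1 where "I1 = (LINT s:{0..x}|lborel. plane_wave k s * (q s * y s))"
  define I2 where "I2 = (LINT s:{0..x}|lborel. plane_wave k (- s) * (q s * y s))"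
  define J where "J = (LINT s:{x<..X}|lborel. plane_wave k s * (q s * y s))"
  have jost_x: "plane_wave k x * (y' x - \<i> * k * y x) = c + I1"
    using jost_identity[of k x] assms unfolding c_def I1_def by simp
  have jost_minus_x: "plane_wave k (- x) * (y' x + \<i> * k * y x) = c + I2"
    using jost_identity[of "- k" x] assms unfolding c_def I2_def by (simp add: plane_wave_uminus)
  have jost_X: "plane_wave k X * (y' X - \<i> * k * y X) = c + I1 + J"
    using jost_identity[of k X] set_integral_qy_split[OF assms, of "plane_wave k"] assms
    unfolding c_def I1_def J_def by (simp add: continuous_intros)
  have "2 * \<i> * k * y x = plane_wave k x * (c + I2) - plane_wave k (- x) * (c + I1)"
    unfolding jost_x[symmetric] jost_minus_x[symmetric] by (simp add: algebra_simps plane_wave_add)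
  then have "y x = (plane_wave k x * (c + I2) - plane_wave k (- x) * (c + I1)) / (2 * \<i> * k)"
    using k_nonzero by (simp add: eq_divide_eq mult.commute)
  also have "\<dots> = dirichlet_sine k x * (c + I1 + J)
                   - (plane_wave k x / (2 * \<i> * k) * (I1 - I2) + dirichlet_sine k x * J)"
    unfolding dirichlet_sine_def by (simp add: diff_divide_distrib add_divide_distrib algebra_simps)
  finally show ?thesis
    unfolding set_integral_green_qy[OF assms] jost_X I1_def I2_def J_def .
qed

lemma norm_y_le:
  assumes "0 \<le> x" "x \<le> X"
  shows "norm (y x) \<le> min x (1 / norm k)
           * (exp (- Im k * (X - x)) * norm (y' X - \<i> * k * y X) + (LINT s:{0..X}|lborel. norm (q s * y s)))"
proof -
  define m where "m = min x (1 / norm k)"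
  define W where "W = y' X - \<i> * k * y X"
  have int: "set_integrable lborel {0..X} (\<lambda>s. green k x s * (q s * y s))"
    by (rule set_integrable_mult_continuous[OF set_integrable_qy[OF order.refl] continuous_on_green[OF k_nonzero]])
  have boundary: "norm (dirichlet_sine k x * (plane_wave k X * W)) \<le> m * (exp (- Im k * (X - x)) * norm W)"
    using norm_plane_wave_mult_sine_le[OF Im_k_pos \<open>0 \<le> x\<close> \<open>x \<le> X\<close>]
    by (simp add: norm_mult m_def mult_ac mult_left_mono)
  have "norm (LINT s:{0..X}|lborel. green k x s * (q s * y s))
      \<le> (LINT s:{0..X}|lborel. norm (green k x s * (q s * y s)))"
    by (rule set_integral_norm_bound[OF int])
  also have "\<dots> \<le> (LINT s:{0..X}|lborel. m * norm (q s * y s))"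
    using set_integrable_norm[OF int] set_integrable_norm[OF set_integrable_qy[OF order.refl]] assms
    by (intro set_integral_mono)
       (auto simp del: norm_mult simp: m_def norm_mult[of "green k x _"] intro!: mult_right_mono norm_green_le[OF Im_k_pos])
  finally have potential: "norm (LINT s:{0..X}|lborel. green k x s * (q s * y s))
      \<le> m * (LINT s:{0..X}|lborel. norm (q s * y s))" by simp
  show ?thesis
    using green_representation[OF assms] boundary potential norm_triangle_ineq4
    unfolding m_def[symmetric] W_def[symmetric]
    by (smt (verit, best) distrib_left)
qed

end

section \<open>Square-integrable solutions vanish for a small potential\<close>

locale L2_dirichlet_solution = dirichlet_solution +
  assumes square_integrable: "set_integrable lborel {0..} (\<lambda>t. (norm (y t))\<^sup>2)"
    and integrable_weighted_potential: "set_integrable lborel {0<..} (\<lambda>s. min s (1 / norm k) * norm (q s))"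
    and weighted_potential_lt_1: "(LINT s:{0<..}|lborel. min s (1 / norm k) * norm (q s)) < 1"
begin

abbreviation r :: real where "r \<equiv> 1 / norm k"

definition M :: real where "M = (LINT s:{0<..}|lborel. min s r * norm (q s))"

definition N :: real where "N = (LINT t:{0..}|lborel. (norm (y t))\<^sup>2)"

definition u :: "real \<Rightarrow> real" where "u s = norm (y s) / min s r"

definition V :: "real \<Rightarrow> real" where "V X = Sup (u ` {0<..X})"

lemma r_pos: "0 < r"
  using k_nonzero by simp

lemma M_nonneg: "0 \<le> M"
  unfolding M_def set_lebesgue_integral_def by (intro integral_nonneg_AE) (auto simp: indicator_def)

lemma M_lt_1: "M < 1"
  unfolding M_def using weighted_potential_lt_1 .

lemma N_nonneg: "0 \<le> N"
  unfolding N_def set_lebesgue_integral_def by (intro integral_nonneg_AE) (auto simp: indicator_def)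

lemma weighted_potential_subset:
  assumes "A \<in> sets lborel" "A \<subseteq> {0..}"
  shows "set_integrable lborel A (\<lambda>s. min s r * norm (q s))"
    and "(LINT s:A|lborel. min s r * norm (q s)) \<le> M"
proof -
  define f where "f s = min s r * norm (q s)" for s
  have restrict: "indicator A s *\<^sub>R f s = indicator (A \<inter> {0<..}) s *\<^sub>R f s" for s
    using assms r_pos by (cases "s = 0") (auto simp: indicator_def f_def)
  have int: "set_integrable lborel (A \<inter> {0<..}) f"
    by (rule set_integrable_subset[OF integrable_weighted_potential[folded f_def]]) (use assms in auto)
  then show "set_integrable lborel A (\<lambda>s. min s r * norm (q s))"
    unfolding set_integrable_def f_def[symmetric] restrict .
  have "(LINT s:A|lborel. f s) = (LINT s:A \<inter> {0<..}|lborel. f s)"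
    unfolding set_lebesgue_integral_def restrict ..
  also have "\<dots> \<le> M"
    unfolding M_def f_def[symmetric] using assms r_pos
    by (intro set_integral_mono_set[OF integrable_weighted_potential[folded f_def]]) (auto simp: f_def)
  finally show "(LINT s:A|lborel. min s r * norm (q s)) \<le> M"
    unfolding f_def .
qed

lemma set_integral_square_le_N: "0 \<le> a \<Longrightarrow> (LINT t:{a..b}|lborel. (norm (y t))\<^sup>2) \<le> N"
  unfolding N_def by (rule set_integral_mono_set[OF square_integrable]) auto

lemma set_integral_norm_y_le: "0 \<le> a \<Longrightarrow> (LINT t:{a..a+1}|lborel. norm (y t)) \<le> (1 + N) / 2"
  using set_integral_norm_le_half[of a "a + 1" y] continuous_on_y set_integral_square_le_N[of a "a + 1"]
  by simp

lemma u_nonneg: "0 < s \<Longrightarrow> 0 \<le> u s"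
  unfolding u_def using r_pos by simp

lemma u_le_boundary_term:
  assumes "0 < s" "s \<le> X"
  shows "u s \<le> exp (- Im k * (X - s)) * norm (y' X - \<i> * k * y X) + (LINT t:{0..X}|lborel. norm (q t * y t))"
proof -
  have "0 < min s r" using assms r_pos by simp
  then show ?thesis
    using norm_y_le[of s X] assms unfolding u_def by (simp add: divide_le_eq mult.commute)
qed

lemma bdd_above_u: "bdd_above (u ` {0<..X})"
proof (rule bdd_aboveI2)
  fix s assume "s \<in> {0<..X}"
  then have "exp (- Im k * (X - s)) * norm (y' X - \<i> * k * y X) \<le> norm (y' X - \<i> * k * y X)"
    using Im_k_pos by (intro mult_left_le_one_le) auto
  then show "u s \<le> norm (y' X - \<i> * k * y X) + (LINT t:{0..X}|lborel. norm (q t * y t))"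
    using u_le_boundary_term[of s X] \<open>s \<in> {0<..X}\<close> by simp
qed

lemma u_le_V: "0 < s \<Longrightarrow> s \<le> X \<Longrightarrow> u s \<le> V X"
  unfolding V_def by (rule cSup_upper[OF _ bdd_above_u]) auto

lemma V_nonneg: "0 < X \<Longrightarrow> 0 \<le> V X"
  using u_le_V[of X X] u_nonneg[of X] by simp

lemma V_mono: "0 < X \<Longrightarrow> X \<le> X' \<Longrightarrow> V X \<le> V X'"
  unfolding V_def by (rule cSup_subset_mono) (auto intro: bdd_above_u)

lemma V_least: "0 < X \<Longrightarrow> (\<And>s. 0 < s \<Longrightarrow> s \<le> X \<Longrightarrow> u s \<le> B) \<Longrightarrow> V X \<le> B"
  unfolding V_def by (rule cSup_least) auto

lemma norm_y_le_V:
  assumes "0 \<le> s" "s \<le> X" "0 < X"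
  shows "norm (y s) \<le> min s r * V X"
proof (cases "s = 0")
  case False
  then have "0 < min s r" using assms r_pos by simp
  then have "min s r * u s = norm (y s)"
    unfolding u_def times_divide_eq_right by (intro nonzero_mult_div_cancel_left) linarith
  then have "norm (y s) = min s r * u s" ..
  also have "\<dots> \<le> min s r * V X"
    using u_le_V[of s X] False assms \<open>0 < min s r\<close> by simp
  finally show ?thesis .
qed (simp add: y_0)

lemma norm_y_le_rV: "0 \<le> s \<Longrightarrow> s \<le> X \<Longrightarrow> 0 < X \<Longrightarrow> norm (y s) \<le> r * V X"
  using norm_y_le_V[of s X] V_nonneg[of X] by (smt (verit) min.cobounded2 mult_right_mono)

lemma set_integral_norm_qy_le:
  assumes "0 \<le> a" "a \<le> b" "0 < b"
  shows "(LINT s:{a..b}|lborel. norm (q s * y s)) \<le> M * V b"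
proof -
  have "(LINT s:{a..b}|lborel. norm (q s * y s)) \<le> (LINT s:{a..b}|lborel. (min s r * norm (q s)) * V b)"
  proof (rule set_integral_mono)
    show "set_integrable lborel {a..b} (\<lambda>s. norm (q s * y s))"
      using assms by (intro set_integrable_norm set_integrable_qy)
    show "set_integrable lborel {a..b} (\<lambda>s. min s r * norm (q s) * V b)"
      using assms by (intro set_integrable_mult_left weighted_potential_subset) auto
    fix s assume "s \<in> {a..b}"
    then show "norm (q s * y s) \<le> min s r * norm (q s) * V b"
      using norm_y_le_V[of s b] assms by (simp add: norm_mult mult_left_mono mult_ac)
  qed
  also have "\<dots> \<le> M * V b"
    using weighted_potential_subset(2)[of "{a..b}"] V_nonneg[of b] assms by (simp add: mult_right_mono)
  finally show ?thesis .
qed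

lemma set_integral_norm_equation_le:
  assumes "0 \<le> a"
  shows "(LINT s:{a..a+1}|lborel. norm ((q s - k\<^sup>2) * y s)) \<le> M * V (a + 1) + (norm k)\<^sup>2 * ((1 + N) / 2)"
proof -
  have int: "set_integrable lborel {a..a+1} (\<lambda>s. norm (q s * y s))"
    "set_integrable lborel {a..a+1} (\<lambda>s. norm (y s))"
    by (intro set_integrable_norm set_integrable_qy assms,
        intro set_integrable_norm borel_integrable_atLeastAtMost' continuous_on_y assms)
  have "(LINT s:{a..a+1}|lborel. norm ((q s - k\<^sup>2) * y s))
      \<le> (LINT s:{a..a+1}|lborel. norm (q s * y s) + (norm k)\<^sup>2 * norm (y s))"
  proof (rule set_integral_mono)
    show "set_integrable lborel {a..a+1} (\<lambda>s. norm ((q s - k\<^sup>2) * y s))"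
      using assms by (intro set_integrable_norm set_integrable_subset[OF integrable_equation[of "a + 1"]]) auto
    show "set_integrable lborel {a..a+1} (\<lambda>s. norm (q s * y s) + (norm k)\<^sup>2 * norm (y s))"
      using int by (intro set_integral_add set_integrable_mult_right)
    show "norm ((q s - k\<^sup>2) * y s) \<le> norm (q s * y s) + (norm k)\<^sup>2 * norm (y s)" for s
      using norm_triangle_ineq4[of "q s * y s" "k\<^sup>2 * y s"] by (simp add: algebra_simps norm_mult norm_power)
  qed
  also have "\<dots> = (LINT s:{a..a+1}|lborel. norm (q s * y s)) + (norm k)\<^sup>2 * (LINT s:{a..a+1}|lborel. norm (y s))"
    using int by (simp add: set_integral_add)
  also have "\<dots> \<le> M * V (a + 1) + (norm k)\<^sup>2 * ((1 + N) / 2)"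
    using set_integral_norm_qy_le[of a "a + 1"] set_integral_norm_y_le[of a] assms
    by (intro add_mono mult_left_mono) auto
  finally show ?thesis .
qed

lemma norm_y'_le:
  assumes "1 \<le> t"
  shows "norm (y' t) \<le> (2 * r + M) * V t + (norm k)\<^sup>2 * ((1 + N) / 2)"
proof -
  define a where "a = t - 1"
  define B where "B = (LINT s:{a..t}|lborel. norm ((q s - k\<^sup>2) * y s))"
  have a: "0 \<le> a" "a \<le> t" "0 < t" "t - a = 1" "t = a + 1"
    using assms by (auto simp: a_def)
  have "norm (y' t - y' s) \<le> B" if "s \<in> {a..t}" for s
  proof -
    have "y' t - y' s = (LINT u:{s<..t}|lborel. (q u - k\<^sup>2) * y u)"
      using that a by (intro y'_increment) auto
    also have "norm \<dots> \<le> (LINT u:{s<..t}|lborel. norm ((q u - k\<^sup>2) * y u))"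
      using that a by (intro set_integral_norm_bound set_integrable_subset[OF integrable_equation[of t]]) auto
    also have "\<dots> \<le> B"
      unfolding B_def using that a
      by (intro set_integral_mono_set set_integrable_norm set_integrable_subset[OF integrable_equation[of t]])
        auto
    finally show ?thesis .
  qed
  then have "norm ((t - a) *\<^sub>R y' t - (y t - y a)) \<le> B * (t - a)"
    using a by (intro norm_derivative_minus_secant_le has_derivative_y_Icc) auto
  then have "norm (y' t) \<le> B + norm (y t) + norm (y a)"
    using a norm_triangle_ineq4[of "y t" "y a"] norm_triangle_ineq2[of "y' t" "y t - y a"] by simp
  moreover have "B \<le> M * V t + (norm k)\<^sup>2 * ((1 + N) / 2)"
    unfolding B_def using set_integral_norm_equation_le[OF a(1)] a(5) by simp
  moreover have "norm (y t) \<le> r * V t" "norm (y a) \<le> r * V t"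
    using norm_y_le_rV[of t t] norm_y_le_rV[of a t] a by auto
  ultimately show ?thesis
    by (simp add: algebra_simps)
qed

lemma exists_norm_y_square_le_N:
  assumes "1 \<le> x"
  obtains t where "t \<in> {x - 1..x}" "(norm (y t))\<^sup>2 \<le> N"
proof -
  obtain t where "t \<in> {x - 1..x}"
    "(x - (x - 1)) * (norm (y t))\<^sup>2 \<le> (LINT s:{x - 1..x}|lborel. (norm (y s))\<^sup>2)"
    by (rule exists_le_set_integral_Icc[of "x - 1" x "\<lambda>s. (norm (y s))\<^sup>2"])
      (use assms in \<open>auto intro!: continuous_intros continuous_on_y\<close>)
  then show thesis
    using that set_integral_square_le_N[of "x - 1" x] assms by force
qed

lemma norm_y_square_le:
  assumes "2 \<le> x"
  shows "(norm (y x))\<^sup>2 \<le> N + (1 + N) * ((2 * r + M) * V x + (norm k)\<^sup>2 * ((1 + N) / 2))"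
proof -
  define P where "P = (2 * r + M) * V x + (norm k)\<^sup>2 * ((1 + N) / 2)"
  have y'_le: "norm (y' s) \<le> P" if "s \<in> {x - 1..x}" for s
  proof -
    have "norm (y' s) \<le> (2 * r + M) * V s + (norm k)\<^sup>2 * ((1 + N) / 2)"
      using norm_y'_le that assms by simp
    also have "\<dots> \<le> P"
      unfolding P_def using V_mono[of s x] that assms r_pos M_nonneg
      by (intro add_right_mono mult_left_mono) auto
    finally show ?thesis .
  qed
  have P_nonneg: "0 \<le> P"
    using y'_le[of x] assms by (auto intro: order.trans[OF norm_ge_zero])
  obtain t where t: "t \<in> {x - 1..x}" "(norm (y t))\<^sup>2 \<le> N"
    using exists_norm_y_square_le_N[of x] assms by auto
  have "(LINT s:{t..x}|lborel. norm (y s)) \<le> (LINT s:{x - 1..x}|lborel. norm (y s))"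
    using t assms
    by (intro set_integral_mono_set borel_integrable_atLeastAtMost' continuous_on_norm continuous_on_y) auto
  also have "\<dots> \<le> (1 + N) / 2"
    using set_integral_norm_y_le[of "x - 1"] assms by simp
  finally have window: "(LINT s:{t..x}|lborel. norm (y s)) \<le> (1 + N) / 2" .
  have "(norm (y x))\<^sup>2 - (norm (y t))\<^sup>2 \<le> 2 * P * (LINT s:{t..x}|lborel. norm (y s))"
    using t assms by (intro norm_square_increment_le[where f'=y'] has_derivative_y_Icc y'_le) auto
  also have "\<dots> \<le> 2 * P * ((1 + N) / 2)"
    using window P_nonneg by (intro mult_left_mono) auto
  also have "\<dots> = (1 + N) * P"
    by simp
  finally have "(norm (y x))\<^sup>2 \<le> N + (1 + N) * P"
    using t(2) by linarith
  then show ?thesis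
    unfolding P_def .
qed

lemma norm_boundary_term_le:
  assumes "1 \<le> X"
  shows "norm (y' X - \<i> * k * y X) \<le> (2 * r + M + 1) * V X + (norm k)\<^sup>2 * ((1 + N) / 2)"
proof -
  have "norm (\<i> * k * y X) = norm k * norm (y X)"
    by (simp add: norm_mult)
  also have "\<dots> \<le> norm k * (r * V X)"
    using norm_y_le_rV[of X X] assms by (intro mult_left_mono) auto
  also have "\<dots> = V X"
    using k_nonzero by simp
  finally show ?thesis
    using norm_y'_le[OF assms] norm_triangle_ineq4[of "y' X" "\<i> * k * y X"] by (simp add: algebra_simps)
qed

lemma u_le:
  assumes "0 < s" "s \<le> X" "1 \<le> X"
  shows "u s \<le> exp (- Im k * (X - s)) * ((2 * r + M + 1) * V X + (norm k)\<^sup>2 * ((1 + N) / 2)) + M * V X"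
proof -
  have "u s \<le> exp (- Im k * (X - s)) * norm (y' X - \<i> * k * y X) + (LINT t:{0..X}|lborel. norm (q t * y t))"
    using u_le_boundary_term assms by simp
  also have "\<dots> \<le> exp (- Im k * (X - s)) * ((2 * r + M + 1) * V X + (norm k)\<^sup>2 * ((1 + N) / 2)) + M * V X"
    using norm_boundary_term_le[of X] set_integral_norm_qy_le[of 0 X] assms
    by (intro add_mono mult_left_mono) auto
  finally show ?thesis .
qed

lemma u_le_far:
  assumes "0 < s" "s \<le> X - L" "1 \<le> X" "0 \<le> L"
    and L: "exp (- Im k * L) * (2 * r + M + 1) \<le> (1 - M) / 2"
  shows "u s \<le> (1 + M) / 2 * V X + (norm k)\<^sup>2 * ((1 + N) / 2)"
proof -
  define C where "C = 2 * r + M + 1"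
  define C2 where "C2 = (norm k)\<^sup>2 * ((1 + N) / 2)"
  define e where "e = exp (- Im k * (X - s))"
  have V: "0 \<le> V X" using V_nonneg assms by simp
  have e: "e \<le> exp (- Im k * L)" "e \<le> 1"
    unfolding e_def using assms Im_k_pos by (simp_all add: zero_le_mult_iff)
  have C: "0 \<le> C2" "0 \<le> C"
    unfolding C_def C2_def using N_nonneg r_pos M_nonneg by auto
  have "e * (C * V X + C2) = (e * C) * V X + e * C2"
    by (simp add: algebra_simps)
  also have "\<dots> \<le> (exp (- Im k * L) * C) * V X + 1 * C2"
    using e C V by (intro add_mono mult_right_mono) auto
  also have "\<dots> \<le> (1 - M) / 2 * V X + C2"
    using mult_right_mono[OF L[folded C_def] V] by simp
  finally have "e * (C * V X + C2) + M * V X \<le> (1 + M) / 2 * V X + C2"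
    by (simp add: field_simps)
  then show ?thesis
    using u_le[of s X] assms unfolding e_def C_def C2_def by linarith
qed

lemma u_square_le_near:
  assumes "max 2 r \<le> s" "s \<le> X"
  shows "(u s)\<^sup>2 \<le> (N + (1 + N) * ((2 * r + M) * V X + (norm k)\<^sup>2 * ((1 + N) / 2))) / r\<^sup>2"
proof -
  have "min s r = r" using assms by simp
  then have "(u s)\<^sup>2 = (norm (y s))\<^sup>2 / r\<^sup>2"
    by (simp add: u_def power_divide power_mult_distrib)
  also have "\<dots> \<le> (N + (1 + N) * ((2 * r + M) * V s + (norm k)\<^sup>2 * ((1 + N) / 2))) / r\<^sup>2"
    using norm_y_square_le[of s] assms by (intro divide_right_mono) auto
  also have "\<dots> \<le> (N + (1 + N) * ((2 * r + M) * V X + (norm k)\<^sup>2 * ((1 + N) / 2))) / r\<^sup>2"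
    using V_mono[of s X] assms r_pos M_nonneg N_nonneg
    by (intro divide_right_mono add_left_mono mult_left_mono add_right_mono) auto
  finally show ?thesis .
qed

text \<open>Far from \<open>X\<close> the boundary term is damped by \<open>exp (- Im k * (X - s))\<close>; near \<open>X\<close>, square
  integrability bounds \<open>(u s)\<^sup>2\<close> by an affine function of \<open>V X\<close>. Both bounds are sublinear in
  \<open>V X\<close>, which caps \<open>V\<close>.\<close>

lemma V_le_max:
  defines "C2 \<equiv> (norm k)\<^sup>2 * ((1 + N) / 2)"
  assumes L: "0 \<le> L" "exp (- Im k * L) * (2 * r + M + 1) \<le> (1 - M) / 2" and X: "L + 2 + r \<le> X"
  shows "V X \<le> max ((1 + M) / 2 * V X + C2) (sqrt ((1 + N) * (2 * r + M) / r\<^sup>2 * V X + (N + (1 + N) * C2) / r\<^sup>2))"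
proof (rule V_least)
  show "0 < X" using X L r_pos by linarith
  have "1 \<le> X" using X L r_pos by linarith
  fix s assume s: "0 < s" "s \<le> X"
  show "u s \<le> max ((1 + M) / 2 * V X + C2) (sqrt ((1 + N) * (2 * r + M) / r\<^sup>2 * V X + (N + (1 + N) * C2) / r\<^sup>2))"
  proof (cases "s \<le> X - L")
    case True
    then show ?thesis
      using u_le_far[OF s(1) True \<open>1 \<le> X\<close> L] unfolding C2_def by simp
  next
    case False
    then have "2 \<le> s" "r \<le> s"
      using X L(1) r_pos by linarith+
    then have "max 2 r \<le> s"
      by simp
    then have "(u s)\<^sup>2 \<le> (N + (1 + N) * ((2 * r + M) * V X + C2)) / r\<^sup>2"
      using u_square_le_near[OF _ s(2)] unfolding C2_def by simp
    also have "\<dots> = (1 + N) * (2 * r + M) / r\<^sup>2 * V X + (N + (1 + N) * C2) / r\<^sup>2"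
      using r_pos by (simp add: field_simps)
    finally have "u s \<le> sqrt ((1 + N) * (2 * r + M) / r\<^sup>2 * V X + (N + (1 + N) * C2) / r\<^sup>2)"
      by (rule real_le_rsqrt)
    then show ?thesis by simp
  qed
qed

lemma V_bounded:
  obtains K where "\<And>X. 0 < X \<Longrightarrow> V X \<le> K"
proof -
  have "\<forall>\<^sub>F L in at_top. exp (- Im k * L) * (2 * r + M + 1) < (1 - M) / 2"
    using tendsto_exp_neg_mult_at_top[OF Im_k_pos, of 0 _ 0] M_lt_1 by (intro order_tendstoD(2)) auto
  then obtain L0 where "\<And>L. L0 \<le> L \<Longrightarrow> exp (- Im k * L) * (2 * r + M + 1) < (1 - M) / 2"
    by (auto simp: eventually_at_top_linorder)
  then obtain L where L: "0 \<le> L" "exp (- Im k * L) * (2 * r + M + 1) \<le> (1 - M) / 2"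
    by (metis less_imp_le max.cobounded1 max.cobounded2)
  define C2 where "C2 = (norm k)\<^sup>2 * ((1 + N) / 2)"
  define K where "K = max (C2 / (1 - (1 + M) / 2)) (max 1 ((1 + N) * (2 * r + M) / r\<^sup>2 + (N + (1 + N) * C2) / r\<^sup>2))"
  have bound: "V X \<le> K" if "L + 2 + r \<le> X" for X
    unfolding K_def using V_le_max[OF L that] M_lt_1 M_nonneg N_nonneg r_pos
    by (intro le_max_affine_sqrt_imp_le) (auto simp: C2_def)
  show thesis
  proof (rule that)
    fix X :: real assume "0 < X"
    then have "V X \<le> V (max X (L + 2 + r))"
      by (intro V_mono) auto
    also have "\<dots> \<le> K"
      by (rule bound) simp
    finally show "V X \<le> K" .
  qed
qed

lemma u_le_M_mult:
  assumes U: "\<And>X. 0 < X \<Longrightarrow> V X \<le> U" and "0 < s"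
  shows "u s \<le> M * U"
proof (rule tendsto_lowerbound)
  define D where "D = (2 * r + M + 1) * U + (norm k)\<^sup>2 * ((1 + N) / 2)"
  show "((\<lambda>X. exp (- Im k * (X - s)) * D + M * U) \<longlongrightarrow> M * U) at_top"
    by (rule tendsto_exp_neg_mult_at_top[OF Im_k_pos])
  have "u s \<le> exp (- Im k * (X - s)) * D + M * U" if "max s 1 \<le> X" for X
  proof -
    have "u s \<le> exp (- Im k * (X - s)) * ((2 * r + M + 1) * V X + (norm k)\<^sup>2 * ((1 + N) / 2)) + M * V X"
      using \<open>0 < s\<close> that by (intro u_le) auto
    also have "\<dots> \<le> exp (- Im k * (X - s)) * D + M * U"
      unfolding D_def using U[of X] that \<open>0 < s\<close> r_pos M_nonneg
      by (intro add_mono mult_left_mono) auto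
    finally show ?thesis .
  qed
  then show "\<forall>\<^sub>F X in at_top. u s \<le> exp (- Im k * (X - s)) * D + M * U"
    unfolding eventually_at_top_linorder by blast
qed simp

lemma y_eq_0:
  assumes "0 \<le> x"
  shows "y x = 0"
proof (cases "x = 0")
  case False
  obtain K where K: "\<And>X. 0 < X \<Longrightarrow> V X \<le> K"
    using V_bounded by blast
  define U where "U = Sup (u ` {0<..})"
  have bdd: "bdd_above (u ` {0<..})"
    by (rule bdd_aboveI2[where M=K]) (use u_le_V K in force)
  have u_le_U: "u s \<le> U" if "0 < s" for s
    unfolding U_def using that by (intro cSup_upper[OF _ bdd]) auto
  have "U \<le> M * U"
    unfolding U_def
    by (rule cSup_least) (auto intro!: u_le_M_mult V_least u_le_U simp flip: U_def)
  then have "(1 - M) * U \<le> 0"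
    by (simp add: algebra_simps)
  then have "u x \<le> 0"
    using u_le_U[of x] M_lt_1 False assms by (simp add: mult_le_0_iff)
  moreover have "0 < min x r"
    using False assms r_pos by simp
  ultimately show ?thesis
    by (simp add: u_def divide_le_0_iff)
qed (simp add: y_0)

end

section \<open>The discrete spectrum\<close>

lemma is_eigenvalue_imp_solution:
  assumes "is_eigenvalue q lam"
  obtains y y' where "L2_half y" "y 0 = 0" "\<exists>x\<ge>0. y x \<noteq> 0"
    "\<And>x. 0 \<le> x \<Longrightarrow> (y has_vector_derivative y' x) (at x within {0..})"
    "\<And>x. 0 \<le> x \<Longrightarrow> set_integrable lborel {0..x} (\<lambda>t. (q t - lam) * y t)"
    "\<And>x. 0 \<le> x \<Longrightarrow> y' x = y' 0 + (LINT t:{0..x}|lborel. (q t - lam) * y t)"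
proof -
  obtain y f y' where y: "L2_half y" "y 0 = 0" "\<exists>x\<ge>0. y x \<noteq> 0"
    and f: "\<forall>x\<ge>0. f x = 0"
    and y': "\<forall>x\<ge>0. (y has_vector_derivative y' x) (at x within {0..})"
    and eq: "\<forall>x\<ge>0. set_integrable lborel {0..x} (\<lambda>t. (q t - lam) * y t - f t) \<and>
                     y' x = y' 0 + (LINT t:{0..x}|lborel. (q t - lam) * y t - f t)"
    using assms unfolding is_eigenvalue_def Hq_minus_solves_def One_nat_def root_vec.simps by blast
  have f_vanishes: "(\<lambda>t. indicator {0..x} t *\<^sub>R ((q t - lam) * y t - f t))
      = (\<lambda>t. indicator {0..x} t *\<^sub>R ((q t - lam) * y t))" for x
    using f by (auto simp: indicator_def)
  show thesis
  proof (rule that[OF y])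
    fix x :: real assume "0 \<le> x"
    then show "(y has_vector_derivative y' x) (at x within {0..})"
      using y' by blast
    show "set_integrable lborel {0..x} (\<lambda>t. (q t - lam) * y t)"
      using eq \<open>0 \<le> x\<close> unfolding set_integrable_def f_vanishes by blast
    show "y' x = y' 0 + (LINT t:{0..x}|lborel. (q t - lam) * y t)"
      using eq \<open>0 \<le> x\<close> unfolding set_lebesgue_integral_def f_vanishes by blast
  qed
qed

lemma i_csqrt_uminus:
  fixes lam :: complex
  assumes "\<not> (Im lam = 0 \<and> 0 \<le> Re lam)"
  shows "(\<i> * csqrt (- lam))\<^sup>2 = lam" and "0 < Im (\<i> * csqrt (- lam))"
proof -
  show "(\<i> * csqrt (- lam))\<^sup>2 = lam"
    by (simp add: power_mult_distrib)
  show "0 < Im (\<i> * csqrt (- lam))"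
  proof (rule ccontr)
    assume "\<not> 0 < Im (\<i> * csqrt (- lam))"
    then have "Re (csqrt (- lam)) = 0"
      using csqrt_principal[of "- lam"] by auto
    define t where "t = Im (csqrt (- lam))"
    have "csqrt (- lam) = \<i> * of_real t"
      using \<open>Re (csqrt (- lam)) = 0\<close> unfolding t_def by (simp add: complex_eq_iff)
    then have "- lam = (\<i> * of_real t)\<^sup>2"
      by (metis power2_csqrt)
    then have "lam = of_real (t\<^sup>2)"
      by (simp add: power_mult_distrib)
    then show False
      using assms by simp
  qed
qed

lemma sigma_d_weighted_potential_ge_1:
  assumes "lam \<in> sigma_d q"
    and int: "set_integrable lborel {0<..} (\<lambda>s. min s (1 / sqrt (norm lam)) * norm (q s))"
  shows "1 \<le> (LINT s:{0<..}|lborel. min s (1 / sqrt (norm lam)) * norm (q s))"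
proof (rule ccontr)
  assume lt: "\<not> ?thesis"
  have lam: "\<not> (Im lam = 0 \<and> 0 \<le> Re lam)" "is_eigenvalue q lam"
    using assms(1) by (auto simp: sigma_d_def)
  define k where "k = \<i> * csqrt (- lam)"
  have k: "k\<^sup>2 = lam" "0 < Im k"
    unfolding k_def using i_csqrt_uminus[OF lam(1)] by auto
  have norm_k: "norm k = sqrt (norm lam)"
    using k(1) norm_power[of k 2] by simp
  obtain y y' where y: "L2_half y" "y 0 = 0" "\<exists>x\<ge>0. y x \<noteq> 0"
    "\<And>x. 0 \<le> x \<Longrightarrow> (y has_vector_derivative y' x) (at x within {0..})"
    "\<And>x. 0 \<le> x \<Longrightarrow> set_integrable lborel {0..x} (\<lambda>t. (q t - lam) * y t)"
    "\<And>x. 0 \<le> x \<Longrightarrow> y' x = y' 0 + (LINT t:{0..x}|lborel. (q t - lam) * y t)"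
    using is_eigenvalue_imp_solution[OF lam(2)] by blast
  interpret L2_dirichlet_solution q y y' k
  proof unfold_locales
    show "y 0 = 0" "0 < Im k" by (fact y(2), fact k(2))
    show "(y has_vector_derivative y' x) (at x within {0..})"
      and "set_integrable lborel {0..x} (\<lambda>t. (q t - k\<^sup>2) * y t)"
      and "y' x = y' 0 + (LINT t:{0..x}|lborel. (q t - k\<^sup>2) * y t)" if "0 \<le> x" for x
      using y(4-6)[OF that] unfolding k(1) by auto
    show "set_integrable lborel {0..} (\<lambda>t. (norm (y t))\<^sup>2)"
      using y(1) unfolding L2_half_def by blast
    show "set_integrable lborel {0<..} (\<lambda>s. min s (1 / norm k) * norm (q s))"
      and "(LINT s:{0<..}|lborel. min s (1 / norm k) * norm (q s)) < 1"
      using int lt unfolding norm_k by auto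
  qed
  show False
    using y(3) y_eq_0 by blast
qed

lemma min_le_a_hat_mult:
  fixes a :: "real \<Rightarrow> real"
  assumes a_pos: "\<forall>x>0. a x > 0" and a_mono: "mono_on {0<..} a"
    and ahat_mono: "mono_on {0<..} (a_hat a)" and "0 < r" "0 < s"
  shows "min s r \<le> a_hat a r * a s"
proof (cases "s \<le> r")
  case True
  then have "s / a s \<le> r / a r"
    using mono_onD[OF ahat_mono, of s r] assms by (auto simp: a_hat_def)
  then show ?thesis
    using True a_pos \<open>0 < s\<close> by (simp add: a_hat_def divide_le_eq)
next
  case False
  have "0 < a r" using a_pos \<open>0 < r\<close> by blast
  have "r = r / a r * a r"
    using \<open>0 < a r\<close> by simp
  also have "\<dots> \<le> r / a r * a s"
    using mono_onD[OF a_mono, of r s] False \<open>0 < a r\<close> assms by (intro mult_left_mono) auto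
  finally show ?thesis
    using False by (simp add: a_hat_def)
qed

lemma sigma_d_a_hat_mult_a_norm_ge_1:
  fixes a :: "real \<Rightarrow> real" and q :: "real \<Rightarrow> complex"
  assumes a_pos: "\<forall>x>0. a x > 0" and a_mono: "mono_on {0<..} a"
    and ahat_mono: "mono_on {0<..} (a_hat a)"
    and q_meas: "q \<in> borel_measurable lborel"
    and q_fin: "set_integrable lborel {0<..} (\<lambda>x. a x * cmod (q x))"
    and lam: "lam \<in> sigma_d q"
  shows "1 \<le> a_hat a (1 / sqrt (cmod lam)) * a_norm a q"
proof -
  define r where "r = 1 / sqrt (cmod lam)"
  have "lam \<noteq> 0"
    using lam by (auto simp: sigma_d_def)
  then have "0 < r"
    unfolding r_def by simp
  have bound: "min s r * cmod (q s) \<le> a_hat a r * (a s * cmod (q s))" if "s \<in> {0<..}" for s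
    using min_le_a_hat_mult[OF a_pos a_mono ahat_mono \<open>0 < r\<close>, of s] that
    by (simp add: mult.assoc[symmetric] mult_right_mono)
  have int: "set_integrable lborel {0<..} (\<lambda>s. min s r * cmod (q s))"
  proof (rule set_integrable_bound[OF set_integrable_mult_right[OF q_fin]])
    show "set_borel_measurable lborel {0<..} (\<lambda>s. min s r * cmod (q s))"
      unfolding set_borel_measurable_def using q_meas by measurable
    show "AE s in lborel. s \<in> {0<..} \<longrightarrow> norm (min s r * cmod (q s)) \<le> norm (a_hat a r * (a s * cmod (q s)))"
      using bound \<open>0 < r\<close> by (intro AE_I2) (auto intro: order.trans[OF _ abs_ge_self])
  qed
  have "1 \<le> (LINT s:{0<..}|lborel. min s r * cmod (q s))"
    using sigma_d_weighted_potential_ge_1[OF lam int[unfolded r_def]] unfolding r_def .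
  also have "\<dots> \<le> (LINT s:{0<..}|lborel. a_hat a r * (a s * cmod (q s)))"
    by (rule set_integral_mono[OF int set_integrable_mult_right[OF q_fin] bound])
  also have "\<dots> = a_hat a r * a_norm a q"
    unfolding a_norm_def by simp
  finally show ?thesis
    unfolding r_def .
qed

lemma rho_le:
  assumes "0 < t" "0 < a_hat a (sqrt t)" "ln 2 \<le> a_hat a (sqrt t) * a_norm a q"
  shows "rho a q \<le> ereal t"
proof -
  have "0 < a_norm a q"
  proof (rule ccontr)
    assume "\<not> 0 < a_norm a q"
    then have "a_hat a (sqrt t) * a_norm a q \<le> 0"
      using assms(2) by (simp add: mult_nonneg_nonpos)
    then show False
      using assms(3) ln_gt_zero[of "2::real"] by linarith
  qed
  then have "ereal (ln 2) / ereal (a_norm a q) \<le> ereal (a_hat a (sqrt t))"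
    using assms(3) by (simp add: divide_le_eq mult.commute)
  then show ?thesis
    unfolding rho_def using \<open>0 < t\<close> by (intro Inf_lower) blast
qed

lemma sigma_d_norm_le_inverse_rho:
  fixes a :: "real \<Rightarrow> real" and q :: "real \<Rightarrow> complex"
  assumes a_pos: "\<forall>x>0. a x > 0" and a_mono: "mono_on {0<..} a"
    and ahat_mono: "mono_on {0<..} (a_hat a)"
    and q_meas: "q \<in> borel_measurable lborel"
    and q_fin: "set_integrable lborel {0<..} (\<lambda>x. a x * cmod (q x))"
    and lam: "lam \<in> sigma_d q"
  shows "ereal (cmod lam) \<le> inverse (rho a q)"
proof -
  have "lam \<noteq> 0"
    using lam by (auto simp: sigma_d_def)
  define t where "t = 1 / cmod lam"
  have t: "0 < t" "sqrt t = 1 / sqrt (cmod lam)"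
    unfolding t_def using \<open>lam \<noteq> 0\<close> by (auto simp: real_sqrt_divide)
  have "ln 2 \<le> (1::real)"
    using ln_le_minus_one[of 2] by simp
  also have "\<dots> \<le> a_hat a (sqrt t) * a_norm a q"
    unfolding t(2) by (rule sigma_d_a_hat_mult_a_norm_ge_1[OF assms])
  finally have "ln 2 \<le> a_hat a (sqrt t) * a_norm a q" .
  moreover have "0 < a_hat a (sqrt t)"
    unfolding a_hat_def using t(1) a_pos by (intro divide_pos_pos) auto
  ultimately have "rho a q \<le> ereal t"
    using t by (intro rho_le) auto
  moreover have "0 \<le> rho a q"
    unfolding rho_def by (rule Inf_greatest) auto
  ultimately have "inverse (ereal t) \<le> inverse (rho a q)"
    by (rule ereal_inverse_antimono[rotated])
  then show ?thesis
    unfolding t_def using \<open>lam \<noteq> 0\<close> by simp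
qed

lemma rho_eq_infinity:
  assumes ahat_mono: "mono_on {0<..} (a_hat a)"
    and lim: "((\<lambda>x. ereal (a_hat a x)) \<longlongrightarrow> L) at_top"
    and L: "L < ereal (ln 2) / ereal (a_norm a q)"
  shows "rho a q = \<infinity>"
proof -
  have "ereal (a_hat a x) \<le> L" if "0 < x" for x
  proof (rule tendsto_lowerbound[OF lim])
    show "\<forall>\<^sub>F z in at_top. ereal (a_hat a x) \<le> ereal (a_hat a z)"
      unfolding eventually_at_top_linorder
      using that mono_onD[OF ahat_mono] by (intro exI[of _ x]) auto
  qed simp
  then have "\<not> ereal (ln 2) / ereal (a_norm a q) \<le> ereal (a_hat a (sqrt t))" if "0 < t" for t
    using L that by (meson not_le order.strict_trans1 real_sqrt_gt_zero)
  then have empty: "{ereal t | t. 0 < t \<and> ereal (a_hat a (sqrt t)) \<ge> ereal (ln 2) / ereal (a_norm a q)} = {}"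
    by blast
  show ?thesis
    unfolding rho_def empty by (simp add: top_ereal_def)
qed

theorem corollary1p3:
  fixes a :: "real \<Rightarrow> real" and q :: "real \<Rightarrow> complex"
  assumes a_pos: "\<forall>x>0. a x > 0"
    and a_loc: "\<forall>s t. 0 < s \<and> s \<le> t \<longrightarrow> set_integrable lborel {s..t} a"
    and a_mono: "mono_on {0<..} a"
    and ahat_mono: "mono_on {0<..} (a_hat a)"
    and q_meas: "q \<in> borel_measurable lborel"
    and q_fin: "set_integrable lborel {0<..} (\<lambda>x. a x * cmod (q x))"
  shows "(\<forall>lam\<in>sigma_d q. ereal (cmod lam) \<le> inverse (rho a q)) \<and>
         (\<forall>L. ((\<lambda>x. ereal (a_hat a x)) \<longlongrightarrow> L) at_top \<and>
               L < ereal (ln 2) / ereal (a_norm a q)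
            \<longrightarrow> rho a q = \<infinity> \<and> sigma_d q = {})"
proof -
  have bound: "\<forall>lam\<in>sigma_d q. ereal (cmod lam) \<le> inverse (rho a q)"
    using sigma_d_norm_le_inverse_rho[OF a_pos a_mono ahat_mono q_meas q_fin] by blast
  moreover have "rho a q = \<infinity> \<and> sigma_d q = {}"
    if "((\<lambda>x. ereal (a_hat a x)) \<longlongrightarrow> L) at_top" "L < ereal (ln 2) / ereal (a_norm a q)" for L
  proof
    show "rho a q = \<infinity>"
      by (rule rho_eq_infinity[OF ahat_mono that])
    then have "lam = 0" if "lam \<in> sigma_d q" for lam
      using bound that by auto
    moreover have "0 \<notin> sigma_d q"
      by (simp add: sigma_d_def)
    ultimately show "sigma_d q = {}"
      by blast
  qed
  ultimately show ?thesis
    by blast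
qed

end
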